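(* Consider $N$ agents $$\dot x_i=\sum_{j=1}^N\alpha_{ij}(y_j-y_i),\qquad y_i=\mathrm{sat}_i(x_i),\qquad i\in\mathcal V=\{1,\dots,N\},$$ where the constant weights $\alpha_{ij}\ge0$ define a directed, strongly connected graph with Laplacian $L$, and let $p=(p_1,\dots,p_N)^T$ be the left eigenvector of $L$ for eigenvalue $0$ normalized so that $\sum_i p_i=1$ (so $p_i>0$). Assume not all $x_i(t_0)$ are equal. Then the agents achieve consensus if and only if $$\Big|\sum_{i=1}^N p_i x_i(t_0)\Big|\le\min_{i\in\mathcal V}s_i.$$
   Context: $\mathrm{sat}_i(x)=\mathrm{sign}(x)\min\{|x|,s_i\}$ with $s_i>0$. $L=\mathrm{diag}(A\mathbf 1)-A$, $A=[\alpha_{ij}]$, $\alpha_{ij}>0$ iff $(i,j)$ is an edge. Strongly connected: a directed path exists between any two distinct nodes. Consensus: there is $C$ with $\lim_{t\to\infty}x_i(t)=C$ for all $i$. *)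

theory Defs
  imports "HOL-Analysis.Analysis"
begin

definition sat :: "real \<Rightarrow> real \<Rightarrow> real" where
  "sat si x = sgn x * min \<bar>x\<bar> si"

definition laplacian :: "('n::finite \<Rightarrow> 'n \<Rightarrow> real) \<Rightarrow> 'n \<Rightarrow> 'n \<Rightarrow> real" where
  "laplacian \<alpha> i j = (if i = j then (\<Sum>k\<in>UNIV. \<alpha> i k) else 0) - \<alpha> i j"

definition edges :: "('n \<Rightarrow> 'n \<Rightarrow> real) \<Rightarrow> ('n \<times> 'n) set" where
  "edges \<alpha> = {(i, j). \<alpha> i j > 0}"

definition strongly_connected :: "('n \<Rightarrow> 'n \<Rightarrow> real) \<Rightarrow> bool" where
  "strongly_connected \<alpha> \<longleftrightarrow> (\<forall>i j. i \<noteq> j \<longrightarrow> (i, j) \<in> (edges \<alpha>)\<^sup>+)"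

definition consensus :: "(real \<Rightarrow> 'n \<Rightarrow> real) \<Rightarrow> bool" where
  "consensus x \<longleftrightarrow> (\<exists>C. \<forall>i. ((\<lambda>t. x t i) \<longlongrightarrow> C) at_top)"

end

(*
  Since p is a left null vector of L, the weighted average W = (\<Sum>i. p i * x i) is invariant,
  so a consensus value can only be W(t0).

  If |W| \<le> min s, the function V = (\<Sum>i. p i * huber (s i) (x i)), where huber s is the
  antiderivative of sat s, decreases at rate (1/2) (\<Sum>i j. p i * \<alpha> i j * (y i - y j)\<^sup>2).
  The outputs y are uniformly Lipschitz, so a Barbalat-type argument makes them agree
  asymptotically along every edge and, by strong connectivity, everywhere; the invariance of W
  then pins the common limit of the outputs, and next of the states, at W.

  Conversely, if a consensus value C exceeded min s, stationarity at the limit would force every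
  s i to equal this minimum (propagating along edges), so the agents would all enter the saturated
  region in finite time and stop there.  The consensus state is then an equilibrium, and backward
  uniqueness (Gronwall) makes it the initial state, contradicting unequal initial values.  The
  case C < - min s is the mirror image under x \<mapsto> - x.
*)
theory Submission
  imports Defs
begin

section \<open>Real calculus\<close>

lemma has_real_derivative_if_quadratic_remainder:
  fixes f :: "real \<Rightarrow> real"
  assumes remainder: "\<And>z. \<bar>f z - f x - D * (z - x)\<bar> \<le> K * (z - x)\<^sup>2"
  shows "(f has_real_derivative D) (at x)"
proof -
  have "((\<lambda>z. (f z - f x) / (z - x) - D) \<longlongrightarrow> 0) (at x)"
  proof (rule Lim_null_comparison)
    show "\<forall>\<^sub>F z in at x. norm ((f z - f x) / (z - x) - D) \<le> K * \<bar>z - x\<bar>"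
      unfolding eventually_at_filter
    proof (intro always_eventually allI impI)
      fix z :: real assume "z \<noteq> x"
      then have "norm ((f z - f x) / (z - x) - D) = \<bar>f z - f x - D * (z - x)\<bar> / \<bar>z - x\<bar>"
        by (simp add: field_simps)
      also have "\<dots> \<le> K * (z - x)\<^sup>2 / \<bar>z - x\<bar>"
        using remainder by (simp add: divide_right_mono)
      also have "\<dots> = K * \<bar>z - x\<bar>"
        using \<open>z \<noteq> x\<close> by (simp add: power2_eq_square divide_simps)
      finally show "norm ((f z - f x) / (z - x) - D) \<le> K * \<bar>z - x\<bar>" .
    qed
    have "((\<lambda>z. K * \<bar>z - x\<bar>) \<longlongrightarrow> K * \<bar>x - x\<bar>) (at x)"
      by (intro tendsto_intros)
    then show "((\<lambda>z. K * \<bar>z - x\<bar>) \<longlongrightarrow> 0) (at x)" by simp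
  qed
  then show ?thesis by (simp add: has_field_derivative_iff LIM_zero_iff)
qed

lemma mvt_within_atLeast:
  fixes f :: "real \<Rightarrow> real"
  assumes deriv: "\<And>t. t0 \<le> t \<Longrightarrow> (f has_real_derivative f' t) (at t within {t0..})"
    and "t0 \<le> a" "a < b"
  obtains z where "a < z" "z < b" "f b - f a = (b - a) * f' z"
proof -
  have "continuous_on {t0..} f"
    using deriv by (meson DERIV_continuous atLeast_iff continuous_on_eq_continuous_within)
  then have cont: "continuous_on {a..b} f"
    by (rule continuous_on_subset) (use assms in auto)
  have interior: "(f has_real_derivative f' z) (at z)" if "a < z" for z
  proof -
    have "(f has_real_derivative f' z) (at z within {t0<..})"
      by (rule DERIV_subset[of _ _ _ "{t0..}"]) (use deriv that assms(2) in auto)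
    moreover have "at z within {t0<..} = at z"
      by (rule at_within_open) (use that assms(2) in auto)
    ultimately show ?thesis by simp
  qed
  obtain l z where "a < z" "z < b" "DERIV f z :> l" "f b - f a = (b - a) * l"
    using MVT[OF assms(3) cont] interior real_differentiable_def by blast
  with interior that show ?thesis using DERIV_unique by metis
qed

lemma deriv_upper_bound_within:
  fixes f :: "real \<Rightarrow> real"
  assumes "\<And>t. t0 \<le> t \<Longrightarrow> (f has_real_derivative f' t) (at t within {t0..})"
    and "t0 \<le> a" "a \<le> b" "\<And>z. a < z \<Longrightarrow> z < b \<Longrightarrow> f' z \<le> K"
  shows "f b - f a \<le> (b - a) * K"
proof (cases "a = b")
  case False
  with assms(3) have "a < b" by simp
  then obtain z where "a < z" "z < b" "f b - f a = (b - a) * f' z"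
    using mvt_within_atLeast[OF assms(1,2)] by blast
  then show ?thesis using assms(4) by (simp add: mult_left_mono)
qed simp

lemma deriv_lower_bound_within:
  fixes f :: "real \<Rightarrow> real"
  assumes "\<And>t. t0 \<le> t \<Longrightarrow> (f has_real_derivative f' t) (at t within {t0..})"
    and "t0 \<le> a" "a \<le> b" "\<And>z. a < z \<Longrightarrow> z < b \<Longrightarrow> K \<le> f' z"
  shows "(b - a) * K \<le> f b - f a"
proof (cases "a = b")
  case False
  with assms(3) have "a < b" by simp
  then obtain z where "a < z" "z < b" "f b - f a = (b - a) * f' z"
    using mvt_within_atLeast[OF assms(1,2)] by blast
  then show ?thesis using assms(4) by (simp add: mult_left_mono)
qed simp

lemma lipschitz_if_deriv_bounded_within:
  fixes f :: "real \<Rightarrow> real"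
  assumes "\<And>t. t0 \<le> t \<Longrightarrow> (f has_real_derivative f' t) (at t within {t0..})"
    and "\<And>t. t0 \<le> t \<Longrightarrow> \<bar>f' t\<bar> \<le> B" and "t0 \<le> a" "t0 \<le> b"
  shows "\<bar>f b - f a\<bar> \<le> B * \<bar>b - a\<bar>"
proof -
  have "norm (f b - f a) \<le> B * norm (b - a)"
  proof (rule field_differentiable_bound[of "{t0..}" f f'])
    show "convex {t0..}" by simp
  qed (use assms in auto)
  then show ?thesis by simp
qed

lemma deriv_limit_nonpos:
  fixes f :: "real \<Rightarrow> real"
  assumes deriv: "\<And>t. t0 \<le> t \<Longrightarrow> (f has_real_derivative f' t) (at t within {t0..})"
    and "(f \<longlongrightarrow> c) at_top" "(f' \<longlongrightarrow> D) at_top"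
  shows "D \<le> 0"
proof (rule ccontr)
  assume "\<not> D \<le> 0"
  then have "\<forall>\<^sub>F t in at_top. D / 2 < f' t \<and> dist (f t) c < 1 \<and> t0 \<le> t"
    using assms(2,3) by (intro eventually_conj order_tendstoD(1) tendstoD eventually_ge_at_top) auto
  then obtain T where T: "\<And>t. T \<le> t \<Longrightarrow> D / 2 < f' t \<and> dist (f t) c < 1 \<and> t0 \<le> t"
    by (auto simp: eventually_at_top_linorder)
  \<comment> \<open>over a time \<open>6 / D\<close> the function rises by 3,
    while near \<open>c\<close> it varies by less than 2\<close>
  define t where "t = T + 6 / D"
  have "T \<le> t" using \<open>\<not> D \<le> 0\<close> by (simp add: t_def)
  have "(t - T) * (D / 2) \<le> f t - f T"
    by (rule deriv_lower_bound_within[OF deriv]) (use T \<open>T \<le> t\<close> in \<open>auto intro: less_imp_le\<close>)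
  moreover have "(t - T) * (D / 2) = 3" using \<open>\<not> D \<le> 0\<close> by (simp add: t_def)
  moreover have "dist (f t) c < 1" "dist (f T) c < 1" using T \<open>T \<le> t\<close> by auto
  ultimately show False by (simp add: dist_real_def abs_less_iff)
qed

lemma deriv_limit_eq_zero:
  fixes f :: "real \<Rightarrow> real"
  assumes deriv: "\<And>t. t0 \<le> t \<Longrightarrow> (f has_real_derivative f' t) (at t within {t0..})"
    and "(f \<longlongrightarrow> c) at_top" "(f' \<longlongrightarrow> D) at_top"
  shows "D = 0"
proof -
  have "\<And>t. t0 \<le> t \<Longrightarrow> ((\<lambda>t. - f t) has_real_derivative - f' t) (at t within {t0..})"
    by (rule DERIV_minus[OF deriv])
  then have "- D \<le> 0"
    by (rule deriv_limit_nonpos) (use assms(2,3) in \<open>auto intro: tendsto_minus\<close>)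
  moreover have "D \<le> 0" by (rule deriv_limit_nonpos[OF deriv assms(2,3)])
  ultimately show ?thesis by simp
qed

lemma gronwall_backward_zero:
  fixes D :: "real \<Rightarrow> real"
  assumes deriv: "\<And>t. t0 \<le> t \<Longrightarrow> (D has_real_derivative D' t) (at t within {t0..})"
    and growth: "\<And>t. t0 \<le> t \<Longrightarrow> - K * D t \<le> D' t"
    and "t0 \<le> T" "D T = 0" "0 \<le> D t0"
  shows "D t0 = 0"
proof -
  define G where "G t = D t * exp (K * t)" for t
  have "(G has_real_derivative (D' t + K * D t) * exp (K * t)) (at t within {t0..})"
    if "t0 \<le> t" for t
  proof -
    have "((\<lambda>t. exp (K * t)) has_real_derivative exp (K * t) * K) (at t within {t0..})"
      by (auto intro!: derivative_eq_intros)
    from DERIV_mult[OF deriv[OF that] this] show ?thesis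
      by (simp add: G_def[abs_def] algebra_simps)
  qed
  moreover have "0 \<le> (D' t + K * D t) * exp (K * t)" if "t0 \<le> t" for t
    using growth[OF that] by simp
  ultimately have "(T - t0) * 0 \<le> G T - G t0"
    by (intro deriv_lower_bound_within[of t0 G]) (use \<open>t0 \<le> T\<close> in auto)
  then have "D t0 * exp (K * t0) \<le> 0" using \<open>D T = 0\<close> by (simp add: G_def)
  with \<open>0 \<le> D t0\<close> show ?thesis by (simp add: mult_le_0_iff)
qed

lemma lipschitz_abs_ge_near:
  fixes g :: "real \<Rightarrow> real"
  assumes lipschitz: "\<And>a b. t0 \<le> a \<Longrightarrow> t0 \<le> b \<Longrightarrow> \<bar>g b - g a\<bar> \<le> L * \<bar>b - a\<bar>"
    and "t0 \<le> t" "e \<le> \<bar>g t\<bar>" "t \<le> z" "z - t \<le> e / (2 * (\<bar>L\<bar> + 1))"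
  shows "e / 2 \<le> \<bar>g z\<bar>"
proof -
  have "\<bar>g z - g t\<bar> \<le> (\<bar>L\<bar> + 1) * (z - t)"
    using lipschitz[of t z] assms(2,4) by (smt (verit) abs_ge_self mult_right_mono abs_ge_zero)
  also have "\<dots> \<le> (\<bar>L\<bar> + 1) * (e / (2 * (\<bar>L\<bar> + 1)))"
    using assms(5) by (intro mult_left_mono) auto
  also have "\<dots> = e / 2" by (simp add: divide_simps)
  finally show ?thesis using assms(3) by linarith
qed

lemma tendsto_zero_if_dissipated:
  fixes V V' g :: "real \<Rightarrow> real"
  assumes deriv: "\<And>t. t0 \<le> t \<Longrightarrow> (V has_real_derivative V' t) (at t within {t0..})"
    and dissipation: "\<And>t. t0 \<le> t \<Longrightarrow> V' t \<le> - (c * (g t)\<^sup>2)"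
    and "0 < c" and bounded: "\<And>t. t0 \<le> t \<Longrightarrow> 0 \<le> V t"
    and lipschitz: "\<And>a b. t0 \<le> a \<Longrightarrow> t0 \<le> b \<Longrightarrow> \<bar>g b - g a\<bar> \<le> L * \<bar>b - a\<bar>"
  shows "(g \<longlongrightarrow> 0) at_top"
proof (rule tendstoI)
  fix e :: real assume "0 < e"
  define h where "h = e / (2 * (\<bar>L\<bar> + 1))"
  define decrease where "decrease = h * (c * e\<^sup>2 / 4)"
  have "0 < h" using \<open>0 < e\<close> by (simp add: h_def add_pos_nonneg)
  then have "0 < decrease" using \<open>0 < c\<close> \<open>0 < e\<close> by (simp add: decrease_def)
  have antimono: "V b \<le> V a" if "t0 \<le> a" "a \<le> b" for a b
    using deriv_upper_bound_within[OF deriv that, of 0] dissipation \<open>0 < c\<close> that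
    by (smt (verit) mult_nonneg_nonneg zero_le_power2)
  define V_inf where "V_inf = Inf (V ` {t0..})"
  have bdd: "bdd_below (V ` {t0..})"
    by (rule bdd_belowI[where m = 0]) (auto intro: bounded)
  have "\<exists>v\<in>V ` {t0..}. v < V_inf + decrease"
    unfolding V_inf_def using bdd \<open>0 < decrease\<close> by (subst cInf_less_iff[symmetric]) auto
  then obtain T where T: "t0 \<le> T" "V T < V_inf + decrease" by auto
  have "\<bar>g t\<bar> < e" if "T \<le> t" for t
  proof (rule ccontr)
    assume "\<not> \<bar>g t\<bar> < e"
    have "t0 \<le> t" "t \<le> t + h" using T(1) that \<open>0 < h\<close> by simp_all
    have slope: "V' z \<le> - (c * e\<^sup>2 / 4)" if z: "t < z" "z < t + h" for z
    proof -
      have "e / 2 \<le> \<bar>g z\<bar>"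
        using lipschitz_abs_ge_near[OF lipschitz \<open>t0 \<le> t\<close>, of e z] \<open>\<not> \<bar>g t\<bar> < e\<close> z
        by (simp add: h_def)
      then have "(e / 2)\<^sup>2 \<le> (g z)\<^sup>2"
        using \<open>0 < e\<close> by (metis abs_le_square_iff abs_of_pos half_gt_zero)
      then have "c * (e / 2)\<^sup>2 \<le> c * (g z)\<^sup>2"
        using \<open>0 < c\<close> by simp
      then show ?thesis
        using dissipation[of z] \<open>t0 \<le> t\<close> z by (simp add: power_divide)
    qed
    have "V (t + h) - V t \<le> ((t + h) - t) * (- (c * e\<^sup>2 / 4))"
      by (rule deriv_upper_bound_within[OF deriv \<open>t0 \<le> t\<close> \<open>t \<le> t + h\<close> slope])
    moreover have "V t \<le> V T" by (rule antimono) (use T that in auto)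
    moreover have "V_inf \<le> V (t + h)"
      unfolding V_inf_def using bdd \<open>t0 \<le> t\<close> \<open>0 < h\<close> by (auto intro: cInf_lower)
    ultimately show False using T(2) by (simp add: decrease_def)
  qed
  then show "\<forall>\<^sub>F t in at_top. dist (g t) 0 < e"
    unfolding eventually_at_top_linorder by auto
qed

section \<open>Saturation and its antiderivative\<close>

lemma sat_eq_clamp: "0 \<le> s \<Longrightarrow> sat s x = max (-s) (min x s)"
  by (auto simp: sat_def sgn_if min_def max_def)

lemma sat_minus: "sat s (-x) = - sat s x"
  by (simp add: sat_def sgn_minus)

lemma sat_lipschitz: "0 \<le> s \<Longrightarrow> \<bar>sat s a - sat s b\<bar> \<le> \<bar>a - b\<bar>"
  by (simp add: sat_eq_clamp min_def max_def)

lemma abs_sat_le: "0 \<le> s \<Longrightarrow> \<bar>sat s x\<bar> \<le> s"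
  by (simp add: sat_eq_clamp)

lemma sat_eq_upper: "0 \<le> s \<Longrightarrow> s \<le> x \<Longrightarrow> sat s x = s"
  by (simp add: sat_eq_clamp)

lemma le_sat_if_less_upper: "0 \<le> s \<Longrightarrow> sat s x < s \<Longrightarrow> x \<le> sat s x"
  by (simp add: sat_eq_clamp min_def max_def split: if_splits)

lemma sat_le_if_greater_lower: "0 \<le> s \<Longrightarrow> -s < sat s x \<Longrightarrow> sat s x \<le> x"
  by (simp add: sat_eq_clamp min_def max_def split: if_splits)

lemma sat_increment_dead_zone_nonneg:
  assumes "0 \<le> s"
  shows "0 \<le> (sat s z - sat s x) * (z - sat s z)"
proof -
  have bound: "\<bar>sat s x\<bar> \<le> s" using assms by (simp add: sat_eq_clamp)
  consider "s \<le> z" "sat s z = s" | "z \<le> -s" "sat s z = -s" | "sat s z = z"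
    using assms by (cases "s \<le> z"; cases "z \<le> -s") (auto simp: sat_eq_clamp)
  then show ?thesis
  proof cases
    case 1
    then show ?thesis using bound by (intro mult_nonneg_nonneg) auto
  next
    case 2
    then show ?thesis using bound by (intro mult_nonpos_nonpos) auto
  qed simp
qed

lemma isCont_sat: "0 \<le> s \<Longrightarrow> isCont (sat s) x"
proof -
  assume "0 \<le> s"
  then have "sat s = (\<lambda>x. max (-s) (min x s))" by (simp add: fun_eq_iff sat_eq_clamp)
  then show ?thesis by (simp add: continuous_intros)
qed

lemma tendsto_sat: "0 \<le> s \<Longrightarrow> (f \<longlongrightarrow> c) F \<Longrightarrow> ((\<lambda>t. sat s (f t)) \<longlongrightarrow> sat s c) F"
  by (rule isCont_tendsto_compose[OF isCont_sat])

text \<open>The Huber function: the antiderivative of \<open>sat s\<close> vanishing at 0.\<close>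
definition huber :: "real \<Rightarrow> real \<Rightarrow> real" where
  "huber s x = x * sat s x - (sat s x)\<^sup>2 / 2"

lemma huber_nonneg:
  assumes "0 \<le> s"
  shows "0 \<le> huber s x"
proof -
  have "huber s x = (sat s x - sat s 0) * (x - sat s x) + (sat s x)\<^sup>2 / 2"
    by (simp add: huber_def sat_def power2_eq_square algebra_simps)
  then show ?thesis
    using sat_increment_dead_zone_nonneg[OF assms, of x 0] by simp
qed

lemma huber_taylor_remainder:
  assumes "0 \<le> s"
  shows "\<bar>huber s z - huber s x - sat s x * (z - x)\<bar> \<le> (z - x)\<^sup>2 / 2"
proof -
  define a b where "a = sat s x" and "b = sat s z"
  have "huber s z - huber s x - a * (z - x) = (b - a) * (z - b) + (b - a)\<^sup>2 / 2"
    unfolding huber_def a_def[symmetric] b_def[symmetric] by (simp add: power2_eq_square field_simps)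
  moreover have "(z - x)\<^sup>2 / 2 - ((b - a) * (z - b) + (b - a)\<^sup>2 / 2)
      = (a - b) * (x - a) + ((z - b) - (x - a))\<^sup>2 / 2"
    by (simp add: power2_eq_square field_simps)
  moreover have "0 \<le> (b - a) * (z - b)" "0 \<le> (a - b) * (x - a)"
    using assms by (simp_all add: a_def b_def sat_increment_dead_zone_nonneg)
  moreover have "0 \<le> (b - a)\<^sup>2" "0 \<le> ((z - b) - (x - a))\<^sup>2"
    by simp_all
  ultimately have "\<bar>huber s z - huber s x - a * (z - x)\<bar> \<le> (z - x)\<^sup>2 / 2"
    by linarith
  then show ?thesis by (simp add: a_def)
qed

lemma has_real_derivative_huber: "0 \<le> s \<Longrightarrow> (huber s has_real_derivative sat s x) (at x)"
  by (rule has_real_derivative_if_quadratic_remainder[where K = "1/2"])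
    (use huber_taylor_remainder[of s] in auto)

section \<open>Left null vectors of the Laplacian\<close>

lemma strongly_connected_closed_eq_UNIV:
  assumes "strongly_connected \<alpha>" "a \<in> A"
    and closed: "\<And>i j. i \<in> A \<Longrightarrow> \<alpha> i j > 0 \<Longrightarrow> j \<in> A"
  shows "A = UNIV"
proof -
  have "j \<in> A" for j
  proof (cases "a = j")
    case False
    then have "(a, j) \<in> (edges \<alpha>)\<^sup>+"
      using assms(1) by (auto simp: strongly_connected_def)
    then show ?thesis
      by (induction rule: trancl_induct) (auto simp: edges_def intro: closed assms(2))
  qed (use assms(2) in simp)
  then show ?thesis by auto
qed

context
  fixes \<alpha> :: "'n::finite \<Rightarrow> 'n \<Rightarrow> real" and p :: "'n \<Rightarrow> real"
  assumes left_kernel: "\<forall>j. (\<Sum>i\<in>UNIV. p i * laplacian \<alpha> i j) = 0"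
begin

lemma laplacian_left_kernel_column_sum: "(\<Sum>i\<in>UNIV. p i * \<alpha> i j) = p j * (\<Sum>k\<in>UNIV. \<alpha> j k)"
proof -
  have "(\<Sum>i\<in>UNIV. p i * laplacian \<alpha> i j) = p j * (\<Sum>k\<in>UNIV. \<alpha> j k) - (\<Sum>i\<in>UNIV. p i * \<alpha> i j)"
    by (simp add: laplacian_def right_diff_distrib sum_subtractf if_distrib[of "(*) _"] cong: if_cong)
  with left_kernel show ?thesis by simp
qed

lemma laplacian_left_kernel_weighted_sum: "(\<Sum>i\<in>UNIV. p i * (\<Sum>j\<in>UNIV. \<alpha> i j * (g j - g i))) = 0"
proof -
  have "(\<Sum>i\<in>UNIV. p i * (\<Sum>j\<in>UNIV. \<alpha> i j * g j)) = (\<Sum>i\<in>UNIV. \<Sum>j\<in>UNIV. p i * \<alpha> i j * g j)"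
    by (simp add: sum_distrib_left mult.assoc)
  also have "\<dots> = (\<Sum>j\<in>UNIV. \<Sum>i\<in>UNIV. p i * \<alpha> i j * g j)"
    by (rule sum.swap)
  also have "\<dots> = (\<Sum>j\<in>UNIV. (\<Sum>i\<in>UNIV. p i * \<alpha> i j) * g j)"
    by (simp add: sum_distrib_right)
  also have "\<dots> = (\<Sum>i\<in>UNIV. p i * (\<Sum>j\<in>UNIV. \<alpha> i j * g i))"
    by (simp add: laplacian_left_kernel_column_sum sum_distrib_right mult.assoc)
  finally show ?thesis
    by (simp add: right_diff_distrib sum_subtractf)
qed

lemma laplacian_left_kernel_dissipation:
  "(\<Sum>i\<in>UNIV. p i * (g i * (\<Sum>j\<in>UNIV. \<alpha> i j * (g j - g i))))
     = -(1/2) * (\<Sum>i\<in>UNIV. \<Sum>j\<in>UNIV. p i * \<alpha> i j * (g i - g j)\<^sup>2)"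
proof -
  have "p i * (g i * (\<Sum>j\<in>UNIV. \<alpha> i j * (g j - g i)))
      = -(1/2) * (\<Sum>j\<in>UNIV. p i * \<alpha> i j * (g i - g j)\<^sup>2)
        + (1/2) * (p i * (\<Sum>j\<in>UNIV. \<alpha> i j * ((g j)\<^sup>2 - (g i)\<^sup>2)))" for i
    unfolding sum_distrib_left sum.distrib[symmetric]
    by (rule sum.cong) (simp_all add: power2_eq_square algebra_simps)
  then have "(\<Sum>i\<in>UNIV. p i * (g i * (\<Sum>j\<in>UNIV. \<alpha> i j * (g j - g i))))
      = -(1/2) * (\<Sum>i\<in>UNIV. \<Sum>j\<in>UNIV. p i * \<alpha> i j * (g i - g j)\<^sup>2)
        + (1/2) * (\<Sum>i\<in>UNIV. p i * (\<Sum>j\<in>UNIV. \<alpha> i j * ((g j)\<^sup>2 - (g i)\<^sup>2)))"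
    by (simp add: sum.distrib sum_distrib_left)
  then show ?thesis
    using laplacian_left_kernel_weighted_sum[of "\<lambda>i. (g i)\<^sup>2"] by simp
qed

text \<open>Balance of the weighted flow across the cut between \<open>{j. p j \<le> 0}\<close> and its complement:
  the inflow carried by positive weights equals an outflow carried by nonpositive ones.\<close>
lemma laplacian_left_kernel_no_edge_into_nonpos:
  assumes nonneg: "\<forall>i j. \<alpha> i j \<ge> 0" and "0 < p i" "p j \<le> 0"
  shows "\<alpha> i j = 0"
proof -
  define S where "S = {j. p j \<le> 0}"
  have split: "(\<Sum>i\<in>UNIV. g i) = (\<Sum>i\<in>S. g i) + (\<Sum>i\<in>-S. g i)" for g :: "'n \<Rightarrow> real"
    using sum.Int_Diff[of UNIV g S] by (simp add: Compl_eq_Diff_UNIV)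
  have "(\<Sum>j\<in>S. \<Sum>i\<in>UNIV. p i * \<alpha> i j) = (\<Sum>j\<in>S. \<Sum>k\<in>UNIV. p j * \<alpha> j k)"
    by (simp add: laplacian_left_kernel_column_sum sum_distrib_left)
  moreover have "(\<Sum>j\<in>S. \<Sum>i\<in>S. p i * \<alpha> i j) = (\<Sum>j\<in>S. \<Sum>k\<in>S. p j * \<alpha> j k)"
    by (rule sum.swap)
  ultimately have "(\<Sum>j\<in>S. \<Sum>i\<in>-S. p i * \<alpha> i j) = (\<Sum>j\<in>S. \<Sum>k\<in>-S. p j * \<alpha> j k)"
    by (simp add: split sum.distrib)
  also have "\<dots> \<le> 0"
    using nonneg by (intro sum_nonpos) (auto simp: S_def intro: mult_nonpos_nonneg)
  finally have inflow: "(\<Sum>j\<in>S. \<Sum>i\<in>-S. p i * \<alpha> i j) \<le> 0" .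
  have nonneg_terms: "0 \<le> p i * \<alpha> i j" if "i \<in> -S" for i j
    using nonneg that by (simp add: S_def)
  have column_nonneg: "0 \<le> (\<Sum>i\<in>-S. p i * \<alpha> i j)" for j
    by (intro sum_nonneg nonneg_terms)
  then have "(\<Sum>j\<in>S. \<Sum>i\<in>-S. p i * \<alpha> i j) = 0"
    using inflow by (simp add: order_antisym sum_nonneg)
  then have "(\<Sum>i\<in>-S. p i * \<alpha> i j) = 0"
    using assms(3) column_nonneg by (simp add: S_def sum_nonneg_eq_0_iff)
  then have "p i * \<alpha> i j = 0"
    using sum_nonneg_eq_0_iff[of "-S" "\<lambda>i. p i * \<alpha> i j"] assms(2)
    by (simp add: S_def nonneg_terms)
  then show ?thesis using assms(2) by simp
qed

lemma laplacian_left_kernel_pos: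
  assumes nonneg: "\<forall>i j. \<alpha> i j \<ge> 0" and sc: "strongly_connected \<alpha>"
    and norm: "(\<Sum>i\<in>UNIV. p i) = 1"
  shows "p i > 0"
proof -
  obtain a where "p a > 0"
    using norm sum_nonpos[of UNIV p] by (metis not_le zero_less_one order.refl)
  then have "{j. 0 < p j} = UNIV"
  proof (intro strongly_connected_closed_eq_UNIV[OF sc, of a])
    show "j \<in> {j. 0 < p j}" if "i \<in> {j. 0 < p j}" "0 < \<alpha> i j" for i j
      using laplacian_left_kernel_no_edge_into_nonpos[OF nonneg, of i j] that by force
  qed simp
  then show ?thesis by auto
qed

end

section \<open>The saturated network\<close>

locale saturated_network =
  fixes \<alpha> :: "'n::finite \<Rightarrow> 'n \<Rightarrow> real" and s :: "'n \<Rightarrow> real" and p :: "'n \<Rightarrow> real"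
    and x :: "real \<Rightarrow> 'n \<Rightarrow> real" and t0 :: real
  assumes nonneg: "\<forall>i j. \<alpha> i j \<ge> 0"
    and sc: "strongly_connected \<alpha>"
    and s_pos: "\<forall>i. s i > 0"
    and p_left: "\<forall>j. (\<Sum>i\<in>UNIV. p i * laplacian \<alpha> i j) = 0"
    and p_norm: "(\<Sum>i\<in>UNIV. p i) = 1"
    and ode: "\<forall>t\<ge>t0. \<forall>i. ((\<lambda>\<tau>. x \<tau> i) has_real_derivative
                 (\<Sum>j\<in>UNIV. \<alpha> i j * (sat (s j) (x t j) - sat (s i) (x t i)))) (at t within {t0..})"
begin

abbreviation y :: "real \<Rightarrow> 'n \<Rightarrow> real" where
  "y t i \<equiv> sat (s i) (x t i)"

abbreviation u :: "real \<Rightarrow> 'n \<Rightarrow> real" where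
  "u t i \<equiv> \<Sum>j\<in>UNIV. \<alpha> i j * (y t j - y t i)"

abbreviation weighted_avg :: "real \<Rightarrow> real" where
  "weighted_avg t \<equiv> \<Sum>i\<in>UNIV. p i * x t i"

lemma s_nonneg: "0 \<le> s i"
  using s_pos by (simp add: less_imp_le)

lemma p_pos: "0 < p i"
  using laplacian_left_kernel_pos[OF p_left nonneg sc p_norm] .

lemma sum_p_mult: "(\<Sum>i\<in>UNIV. p i * c) = c"
  using p_norm by (simp flip: sum_distrib_right)

lemma x_has_derivative: "t0 \<le> t \<Longrightarrow> ((\<lambda>\<tau>. x \<tau> i) has_real_derivative u t i) (at t within {t0..})"
  using ode by simp

lemma negated: "saturated_network \<alpha> s p (\<lambda>t i. - x t i) t0"
proof
  have "- u t i = (\<Sum>j\<in>UNIV. \<alpha> i j * (sat (s j) (- x t j) - sat (s i) (- x t i)))" for t i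
    unfolding sat_minus sum_negf[symmetric] by (rule sum.cong) (simp_all add: right_diff_distrib)
  then show "\<forall>t\<ge>t0. \<forall>i. ((\<lambda>\<tau>. - x \<tau> i) has_real_derivative
      (\<Sum>j\<in>UNIV. \<alpha> i j * (sat (s j) (- x t j) - sat (s i) (- x t i)))) (at t within {t0..})"
    using DERIV_minus[OF x_has_derivative] by auto
qed (rule nonneg sc s_pos p_left p_norm)+

lemma weighted_avg_const:
  assumes "t0 \<le> t"
  shows "weighted_avg t = weighted_avg t0"
proof -
  have "(weighted_avg has_real_derivative (\<Sum>i\<in>UNIV. p i * u t i)) (at t within {t0..})"
    if "t0 \<le> t" for t
    by (intro DERIV_sum DERIV_cmult x_has_derivative that)
  moreover have "(\<Sum>i\<in>UNIV. p i * u t i) = 0" for t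
    by (rule laplacian_left_kernel_weighted_sum[OF p_left])
  ultimately have "\<bar>weighted_avg t - weighted_avg t0\<bar> \<le> 0 * \<bar>t - t0\<bar>"
    by (intro lipschitz_if_deriv_bounded_within[of t0]) (use assms in auto)
  then show ?thesis by simp
qed

lemma consensus_value_eq_weighted_avg:
  assumes "\<forall>i. ((\<lambda>t. x t i) \<longlongrightarrow> C) at_top"
  shows "C = weighted_avg t0"
proof (rule tendsto_unique[OF trivial_limit_at_top_linorder])
  have "(weighted_avg \<longlongrightarrow> (\<Sum>i\<in>UNIV. p i * C)) at_top"
    using assms by (intro tendsto_sum tendsto_mult_left) auto
  then show "(weighted_avg \<longlongrightarrow> C) at_top" by (simp only: sum_p_mult)
  have "\<forall>\<^sub>F t in at_top. weighted_avg t = weighted_avg t0"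
    unfolding eventually_at_top_linorder using weighted_avg_const by blast
  then show "(weighted_avg \<longlongrightarrow> weighted_avg t0) at_top"
    by (rule tendsto_eventually)
qed

definition rate_bound :: "'n \<Rightarrow> real" where
  "rate_bound i = (\<Sum>j\<in>UNIV. \<alpha> i j * (s j + s i))"

lemma abs_u_le: "\<bar>u t i\<bar> \<le> rate_bound i"
proof -
  have "\<bar>u t i\<bar> \<le> (\<Sum>j\<in>UNIV. \<bar>\<alpha> i j * (y t j - y t i)\<bar>)" by (rule sum_abs)
  also have "\<dots> \<le> rate_bound i"
    unfolding rate_bound_def
  proof (rule sum_mono)
    fix j
    have "\<bar>y t j - y t i\<bar> \<le> s j + s i"
      using abs_sat_le[OF s_nonneg, of j "x t j"] abs_sat_le[OF s_nonneg, of i "x t i"] by linarith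
    then show "\<bar>\<alpha> i j * (y t j - y t i)\<bar> \<le> \<alpha> i j * (s j + s i)"
      using nonneg by (simp add: abs_mult mult_left_mono)
  qed
  finally show ?thesis .
qed

lemma y_lipschitz:
  assumes "t0 \<le> a" "t0 \<le> b"
  shows "\<bar>y b i - y a i\<bar> \<le> rate_bound i * \<bar>b - a\<bar>"
proof -
  have "\<bar>x b i - x a i\<bar> \<le> rate_bound i * \<bar>b - a\<bar>"
    by (rule lipschitz_if_deriv_bounded_within[OF x_has_derivative abs_u_le assms])
  then show ?thesis
    using sat_lipschitz[OF s_nonneg, of i "x b i" "x a i"] by linarith
qed

end

subsection \<open>Necessity of the bound\<close>

lemma abs_mult_le_sum_squares:
  fixes e :: "'n::finite \<Rightarrow> real"
  shows "\<bar>e i\<bar> * \<bar>e j\<bar> \<le> (\<Sum>k\<in>UNIV. (e k)\<^sup>2)"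
proof -
  have "(e i)\<^sup>2 \<le> (\<Sum>k\<in>UNIV. (e k)\<^sup>2)" "(e j)\<^sup>2 \<le> (\<Sum>k\<in>UNIV. (e k)\<^sup>2)"
    by (auto intro: member_le_sum)
  moreover have "2 * (\<bar>e i\<bar> * \<bar>e j\<bar>) \<le> (e i)\<^sup>2 + (e j)\<^sup>2"
    using sum_squares_bound[of "\<bar>e i\<bar>" "\<bar>e j\<bar>"] by simp
  ultimately show ?thesis by linarith
qed

context saturated_network
begin

lemma limit_stationary:
  assumes lim: "\<forall>i. ((\<lambda>t. x t i) \<longlongrightarrow> C) at_top"
  shows "(\<Sum>j\<in>UNIV. \<alpha> i j * (sat (s j) C - sat (s i) C)) = 0"
proof -
  have "((\<lambda>t. u t i) \<longlongrightarrow> (\<Sum>j\<in>UNIV. \<alpha> i j * (sat (s j) C - sat (s i) C))) at_top"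
    using lim by (intro tendsto_sum tendsto_mult_left tendsto_diff tendsto_sat s_nonneg) auto
  with lim show ?thesis
    using deriv_limit_eq_zero[where f = "\<lambda>t. x t i" and f' = "\<lambda>t. u t i"] x_has_derivative by blast
qed

lemma saturation_levels_eq_Min:
  assumes lim: "\<forall>i. ((\<lambda>t. x t i) \<longlongrightarrow> C) at_top" and above: "Min (range s) < C"
  shows "s j = Min (range s)"
proof -
  define m where "m = Min (range s)"
  have m_le: "m \<le> s i" for i by (simp add: m_def)
  have "m \<in> range s" unfolding m_def by (rule Min_in) auto
  then obtain k where "s k = m" by auto
  then have "0 < m" using s_pos by metis
  have "m < C" using above by (simp add: m_def)
  have sat_C: "sat (s i) C = min C (s i)" for i
    using s_nonneg[of i] m_le[of i] \<open>m < C\<close> \<open>0 < m\<close> by (simp add: sat_eq_clamp)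
  have "{i. s i = m} = UNIV"
  proof (rule strongly_connected_closed_eq_UNIV[OF sc])
    show "k \<in> {i. s i = m}" using \<open>s k = m\<close> by simp
    fix i j assume "i \<in> {i. s i = m}" "0 < \<alpha> i j"
    then have "s i = m" by simp
    have terms_nonneg: "\<forall>l\<in>UNIV. 0 \<le> \<alpha> i l * (min C (s l) - m)"
      using nonneg m_le above by (simp add: m_def)
    have "(\<Sum>l\<in>UNIV. \<alpha> i l * (min C (s l) - m)) = 0"
      using limit_stationary[OF lim, of i] sat_C[of i] \<open>s i = m\<close> \<open>m < C\<close>
      by (simp only: sat_C)
    then have "\<alpha> i j * (min C (s j) - m) = 0"
      using terms_nonneg by (simp add: sum_nonneg_eq_0_iff)
    then have "min C (s j) = m" using \<open>0 < \<alpha> i j\<close> by simp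
    then show "j \<in> {i. s i = m}" using above by (auto simp: m_def min_def split: if_splits)
  qed
  then show ?thesis by (auto simp: m_def)
qed

lemma eventually_at_equilibrium:
  assumes lim: "\<forall>i. ((\<lambda>t. x t i) \<longlongrightarrow> C) at_top" and below: "\<forall>i. s i < C"
  obtains T where "t0 \<le> T" "\<forall>i. x T i = C"
proof -
  have "\<forall>\<^sub>F t in at_top. s i < x t i" for i
    by (rule order_tendstoD(1)[OF lim[rule_format] below[rule_format]])
  then have "\<forall>\<^sub>F t in at_top. \<forall>i. s i < x t i"
    by (rule eventually_all_finite)
  then have "\<forall>\<^sub>F t in at_top. t0 \<le> t \<and> (\<forall>i. s i < x t i)"
    by (intro eventually_conj eventually_ge_at_top)
  then obtain T where T: "t0 \<le> T" "\<And>t i. T \<le> t \<Longrightarrow> s i < x t i"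
    unfolding eventually_at_top_linorder by auto
  \<comment> \<open>beyond \<open>T\<close> every output sits at its limit value,
    so the inputs vanish by stationarity\<close>
  have u_zero: "u t i = 0" if "T \<le> t" for t i
  proof -
    have "y t j = sat (s j) C" for j
      using T(2)[OF that] below s_nonneg by (simp add: sat_eq_upper less_imp_le)
    then show ?thesis using limit_stationary[OF lim, of i] by simp
  qed
  have "x t i = x T i" if "T \<le> t" for t i
  proof -
    have "\<bar>x t i - x T i\<bar> \<le> 0 * \<bar>t - T\<bar>"
    proof (rule lipschitz_if_deriv_bounded_within)
      show "((\<lambda>\<tau>. x \<tau> i) has_real_derivative u t' i) (at t' within {T..})" if "T \<le> t'" for t'
        using T(1) that by (intro DERIV_subset[OF x_has_derivative]) auto
    qed (use u_zero that in auto)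
    then show ?thesis by simp
  qed
  then have "\<forall>t\<ge>T. x t i = x T i" for i by blast
  then have "\<forall>\<^sub>F t in at_top. x t i = x T i" for i
    unfolding eventually_at_top_linorder by blast
  then have "x T i = C" for i
    by (intro tendsto_unique[OF trivial_limit_at_top_linorder _ lim[rule_format]] tendsto_eventually)
  with T(1) that show ?thesis by blast
qed

lemma sq_dist_has_derivative:
  assumes "t0 \<le> t"
  shows "((\<lambda>t. \<Sum>i\<in>UNIV. (x t i - C)\<^sup>2) has_real_derivative (\<Sum>i\<in>UNIV. 2 * (x t i - C) * u t i))
    (at t within {t0..})"
proof (rule DERIV_sum)
  fix i
  have "((\<lambda>t. x t i - C) has_real_derivative u t i - 0) (at t within {t0..})"
    by (rule DERIV_diff[OF x_has_derivative[OF assms] DERIV_const])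
  from DERIV_power[OF this, of 2]
  show "((\<lambda>t. (x t i - C)\<^sup>2) has_real_derivative 2 * (x t i - C) * u t i) (at t within {t0..})"
    by (simp add: algebra_simps)
qed

lemma abs_output_diff_le:
  assumes common: "\<And>i j. sat (s i) C = sat (s j) C"
  shows "\<bar>y t j - y t i\<bar> \<le> \<bar>x t j - C\<bar> + \<bar>x t i - C\<bar>"
proof -
  have "y t j - y t i = (sat (s j) (x t j) - sat (s j) C) - (sat (s i) (x t i) - sat (s i) C)"
    using common[of i j] by simp
  then show ?thesis
    using sat_lipschitz[OF s_nonneg, of j "x t j" C] sat_lipschitz[OF s_nonneg, of i "x t i" C]
    by simp
qed

text \<open>Near an equilibrium at which all saturated values agree, the squared distance to it
  can shrink at most exponentially.\<close>
lemma sq_dist_deriv_lower_bound: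
  assumes common: "\<And>i j. sat (s i) C = sat (s j) C"
  shows "- (4 * (\<Sum>i\<in>UNIV. \<Sum>j\<in>UNIV. \<alpha> i j)) * (\<Sum>i\<in>UNIV. (x t i - C)\<^sup>2)
    \<le> (\<Sum>i\<in>UNIV. 2 * (x t i - C) * u t i)"
proof -
  define e where "e i = x t i - C" for i
  define D where "D = (\<Sum>i\<in>UNIV. (e i)\<^sup>2)"
  have "\<bar>2 * e i * (\<alpha> i j * (y t j - y t i))\<bar> \<le> \<alpha> i j * (4 * D)" for i j
  proof -
    have "\<bar>2 * e i * (\<alpha> i j * (y t j - y t i))\<bar> \<le> 2 * \<bar>e i\<bar> * (\<alpha> i j * (\<bar>e j\<bar> + \<bar>e i\<bar>))"
      using abs_output_diff_le[OF common, where t = t and i = i and j = j, folded e_def] nonneg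
      by (simp add: abs_mult mult_left_mono)
    also have "\<dots> = \<alpha> i j * (2 * (\<bar>e i\<bar> * \<bar>e j\<bar> + \<bar>e i\<bar> * \<bar>e i\<bar>))"
      by (simp add: algebra_simps)
    also have "\<dots> \<le> \<alpha> i j * (4 * D)"
      using abs_mult_le_sum_squares[of e i j] abs_mult_le_sum_squares[of e i i] nonneg
      by (intro mult_left_mono) (auto simp: D_def)
    finally show ?thesis .
  qed
  then have "\<bar>\<Sum>i\<in>UNIV. \<Sum>j\<in>UNIV. 2 * e i * (\<alpha> i j * (y t j - y t i))\<bar>
      \<le> (\<Sum>i\<in>UNIV. \<Sum>j\<in>UNIV. \<alpha> i j * (4 * D))"
    by (intro order_trans[OF sum_abs] sum_mono order_trans[OF sum_abs]) auto
  moreover have "(\<Sum>i\<in>UNIV. \<Sum>j\<in>UNIV. \<alpha> i j * (4 * D)) = (\<Sum>i\<in>UNIV. \<Sum>j\<in>UNIV. \<alpha> i j) * (4 * D)"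
    by (simp only: sum_distrib_right)
  moreover have "(\<Sum>i\<in>UNIV. 2 * (x t i - C) * u t i)
      = (\<Sum>i\<in>UNIV. \<Sum>j\<in>UNIV. 2 * e i * (\<alpha> i j * (y t j - y t i)))"
    by (simp add: e_def sum_distrib_left)
  ultimately show ?thesis
    unfolding D_def e_def by linarith
qed

lemma equilibrium_backward_unique:
  assumes "t0 \<le> T" "\<forall>i. x T i = C" and common: "\<And>i j. sat (s i) C = sat (s j) C"
  shows "x t0 i = C"
proof -
  have "(\<Sum>i\<in>UNIV. (x t0 i - C)\<^sup>2) = 0"
    by (rule gronwall_backward_zero[OF sq_dist_has_derivative sq_dist_deriv_lower_bound[OF common]])
      (use assms in \<open>auto intro: sum_nonneg\<close>)
  then show ?thesis by (simp add: sum_nonneg_eq_0_iff)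
qed

lemma consensus_value_le_Min:
  assumes lim: "\<forall>i. ((\<lambda>t. x t i) \<longlongrightarrow> C) at_top" and not_eq: "\<exists>i j. x t0 i \<noteq> x t0 j"
  shows "C \<le> Min (range s)"
proof (rule ccontr)
  assume "\<not> C \<le> Min (range s)"
  then have levels: "s j = Min (range s)" for j
    by (intro saturation_levels_eq_Min[OF lim]) (simp only: not_le)
  have "s i < C" for i
    using levels[of i] \<open>\<not> C \<le> Min (range s)\<close> by linarith
  then obtain T where "t0 \<le> T" "\<forall>i. x T i = C"
    using eventually_at_equilibrium[OF lim] by blast
  then have "x t0 i = C" for i
    by (rule equilibrium_backward_unique) (simp only: levels)
  with not_eq show False by simp
qed

lemma consensus_value_abs_le_Min:
  assumes "\<forall>i. ((\<lambda>t. x t i) \<longlongrightarrow> C) at_top" and "\<exists>i j. x t0 i \<noteq> x t0 j"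
  shows "\<bar>C\<bar> \<le> Min (range s)"
proof -
  have "- C \<le> Min (range s)"
    using assms by (intro saturated_network.consensus_value_le_Min[OF negated]) (auto intro: tendsto_minus)
  with consensus_value_le_Min[OF assms] show ?thesis by (rule abs_leI)
qed

end

subsection \<open>Sufficiency of the bound\<close>

context saturated_network
begin

definition lyapunov :: "real \<Rightarrow> real" where
  "lyapunov t = (\<Sum>i\<in>UNIV. p i * huber (s i) (x t i))"

definition disagreement :: "real \<Rightarrow> real" where
  "disagreement t = (\<Sum>i\<in>UNIV. \<Sum>j\<in>UNIV. p i * \<alpha> i j * (y t i - y t j)\<^sup>2)"

lemma lyapunov_nonneg: "0 \<le> lyapunov t"
  unfolding lyapunov_def
  by (intro sum_nonneg mult_nonneg_nonneg less_imp_le[OF p_pos] huber_nonneg s_nonneg)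

lemma lyapunov_has_derivative:
  assumes "t0 \<le> t"
  shows "(lyapunov has_real_derivative - (1/2) * disagreement t) (at t within {t0..})"
proof -
  have "((\<lambda>t. huber (s i) (x t i)) has_real_derivative y t i * u t i) (at t within {t0..})" for i
    by (rule DERIV_chain2[OF has_real_derivative_huber[OF s_nonneg] x_has_derivative[OF assms]])
  then have "(lyapunov has_real_derivative (\<Sum>i\<in>UNIV. p i * (y t i * u t i))) (at t within {t0..})"
    unfolding lyapunov_def[abs_def] by (intro DERIV_sum DERIV_cmult)
  moreover have "(\<Sum>i\<in>UNIV. p i * (y t i * u t i)) = - (1/2) * disagreement t"
    unfolding disagreement_def by (rule laplacian_left_kernel_dissipation[OF p_left])
  ultimately show ?thesis by simp
qed

lemma disagreement_ge_edge: "p i * \<alpha> i j * (y t i - y t j)\<^sup>2 \<le> disagreement t"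
proof -
  have terms_nonneg: "0 \<le> p i * \<alpha> i j * (y t i - y t j)\<^sup>2" for i j
    using nonneg p_pos[of i] by simp
  have "p i * \<alpha> i j * (y t i - y t j)\<^sup>2 \<le> (\<Sum>j\<in>UNIV. p i * \<alpha> i j * (y t i - y t j)\<^sup>2)"
    by (rule member_le_sum) (simp_all add: terms_nonneg)
  also have "\<dots> \<le> disagreement t"
    unfolding disagreement_def
    by (rule member_le_sum[of i UNIV "\<lambda>i. \<Sum>j\<in>UNIV. p i * \<alpha> i j * (y t i - y t j)\<^sup>2"])
      (simp_all add: sum_nonneg terms_nonneg)
  finally show ?thesis .
qed

lemma output_diff_tendsto_zero_edge:
  assumes "0 < \<alpha> i j"
  shows "((\<lambda>t. y t i - y t j) \<longlongrightarrow> 0) at_top"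
proof (rule tendsto_zero_if_dissipated[OF lyapunov_has_derivative])
  show "0 < p i * \<alpha> i j / 2" using assms p_pos[of i] by simp
  show "- (1/2) * disagreement t \<le> - (p i * \<alpha> i j / 2 * (y t i - y t j)\<^sup>2)" for t
    using disagreement_ge_edge[of i j t] by simp
  show "\<bar>(y b i - y b j) - (y a i - y a j)\<bar> \<le> (rate_bound i + rate_bound j) * \<bar>b - a\<bar>"
    if "t0 \<le> a" "t0 \<le> b" for a b
    using y_lipschitz[OF that, of i] y_lipschitz[OF that, of j] by (simp add: algebra_simps)
qed (simp_all add: lyapunov_nonneg)

lemma output_diff_tendsto_zero: "((\<lambda>t. y t i - y t j) \<longlongrightarrow> 0) at_top"
proof (cases "i = j")
  case False
  then have "(i, j) \<in> (edges \<alpha>)\<^sup>+" using sc by (auto simp: strongly_connected_def)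
  then show ?thesis
  proof (induction rule: trancl_induct)
    case (base k)
    then show ?case by (simp add: edges_def output_diff_tendsto_zero_edge)
  next
    case (step k l)
    then have "((\<lambda>t. (y t i - y t k) + (y t k - y t l)) \<longlongrightarrow> 0 + 0) at_top"
      by (intro tendsto_add) (simp_all add: edges_def output_diff_tendsto_zero_edge)
    then show ?case by simp
  qed
qed simp

lemma exists_output_ge_weighted_avg:
  assumes "\<forall>i. \<bar>weighted_avg t0\<bar> \<le> s i" and "t0 \<le> t"
  shows "\<exists>j. weighted_avg t0 \<le> y t j"
proof (rule ccontr)
  assume "\<not> ?thesis"
  then have below: "y t j < weighted_avg t0" for j by (simp add: not_le)
  have "x t j < weighted_avg t0" for j
  proof -
    have "y t j < s j" using below[of j] assms(1) by (smt (verit))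
    then have "x t j \<le> y t j" by (rule le_sat_if_less_upper[OF s_nonneg])
    then show ?thesis using below[of j] by linarith
  qed
  then have "weighted_avg t < (\<Sum>j\<in>UNIV. p j * weighted_avg t0)"
    using p_pos by (intro sum_strict_mono) (auto intro: mult_strict_left_mono)
  then show False using weighted_avg_const[OF assms(2)] by (simp add: sum_p_mult)
qed

lemma output_tendsto_weighted_avg:
  assumes "\<forall>i. \<bar>weighted_avg t0\<bar> \<le> s i"
  shows "((\<lambda>t. y t i) \<longlongrightarrow> weighted_avg t0) at_top"
proof -
  let ?C = "weighted_avg t0"
  define S where "S t = (\<Sum>j\<in>UNIV. \<bar>y t i - y t j\<bar>)" for t
  have "norm (y t i - ?C) \<le> S t" if t: "t0 \<le> t" for t
  proof -
    obtain j1 where "?C \<le> y t j1"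
      using exists_output_ge_weighted_avg[OF assms t] by blast
    moreover obtain j2 where "- ?C \<le> - y t j2"
      using saturated_network.exists_output_ge_weighted_avg[OF negated, of t] assms t
      by (auto simp: sat_minus sum_negf)
    moreover have le_S: "\<bar>y t i - y t j\<bar> \<le> S t" for j
      unfolding S_def by (rule member_le_sum) auto
    ultimately show ?thesis
      using le_S[of j1] le_S[of j2] unfolding real_norm_def abs_le_iff by linarith
  qed
  then have "\<forall>\<^sub>F t in at_top. norm (y t i - ?C) \<le> S t"
    unfolding eventually_at_top_linorder by blast
  moreover have "(S \<longlongrightarrow> (\<Sum>j\<in>(UNIV::'n set). \<bar>0::real\<bar>)) at_top"
    unfolding S_def[abs_def] by (intro tendsto_sum tendsto_rabs output_diff_tendsto_zero)
  then have "(S \<longlongrightarrow> 0) at_top" by simp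
  ultimately have "((\<lambda>t. y t i - ?C) \<longlongrightarrow> 0) at_top"
    by (rule Lim_null_comparison)
  then show ?thesis by (simp add: LIM_zero_iff)
qed

lemma state_tendsto_weighted_avg_if_above_lower:
  assumes bound: "\<forall>i. \<bar>weighted_avg t0\<bar> \<le> s i" and above: "\<forall>i. - s i < weighted_avg t0"
  shows "((\<lambda>t. x t i) \<longlongrightarrow> weighted_avg t0) at_top"
proof -
  let ?C = "weighted_avg t0"
  define r where "r t = ?C - (\<Sum>j\<in>UNIV. p j * y t j)" for t
  have y_lim: "((\<lambda>t. y t j) \<longlongrightarrow> ?C) at_top" for j
    by (rule output_tendsto_weighted_avg[OF bound])
  have "(r \<longlongrightarrow> ?C - (\<Sum>j\<in>UNIV. p j * ?C)) at_top"
    unfolding r_def[abs_def] by (intro tendsto_diff tendsto_const tendsto_sum tendsto_mult_left y_lim)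
  then have r_lim: "((\<lambda>t. r t / p i) \<longlongrightarrow> 0) at_top"
    by (intro tendsto_divide_zero) (simp add: sum_p_mult)
  have "\<forall>\<^sub>F t in at_top. \<forall>j. - s j < y t j"
    using above by (intro eventually_all_finite order_tendstoD(1)[OF y_lim]) simp
  moreover have "\<forall>\<^sub>F t in at_top. t0 \<le> t" by (rule eventually_ge_at_top)
  \<comment> \<open>without saturation from below \<open>y \<le> x\<close>,
    and the invariant average bounds the gaps \<open>x - y\<close>\<close>
  ultimately have "\<forall>\<^sub>F t in at_top. norm (x t i - y t i) \<le> r t / p i"
  proof (rule eventually_elim2)
    fix t assume unsat: "\<forall>j. - s j < y t j" and "t0 \<le> t"
    have gap_nonneg: "0 \<le> x t j - y t j" for j
      using sat_le_if_greater_lower[OF s_nonneg unsat[rule_format]] by simp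
    have "(\<Sum>j\<in>UNIV. p j * (x t j - y t j)) = r t"
      using weighted_avg_const[OF \<open>t0 \<le> t\<close>]
      by (simp add: r_def right_diff_distrib sum_subtractf)
    moreover have "p i * (x t i - y t i) \<le> (\<Sum>j\<in>UNIV. p j * (x t j - y t j))"
      by (rule member_le_sum) (auto intro!: mult_nonneg_nonneg gap_nonneg less_imp_le[OF p_pos])
    ultimately show "norm (x t i - y t i) \<le> r t / p i"
      using gap_nonneg[of i] p_pos[of i] by (simp add: field_simps)
  qed
  then have "((\<lambda>t. x t i - y t i) \<longlongrightarrow> 0) at_top"
    using r_lim by (rule Lim_null_comparison)
  from tendsto_add[OF this y_lim[of i]] show ?thesis by simp
qed

lemma state_tendsto_weighted_avg:
  assumes "\<bar>weighted_avg t0\<bar> \<le> Min (range s)"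
  shows "((\<lambda>t. x t i) \<longlongrightarrow> weighted_avg t0) at_top"
proof -
  have "Min (range s) \<le> s j" for j by simp
  then have bound: "\<forall>j. \<bar>weighted_avg t0\<bar> \<le> s j" using assms by (metis order_trans)
  have "0 < Min (range s)" using s_pos by simp
  then consider "\<forall>j. - s j < weighted_avg t0" | "\<forall>j. - s j < - weighted_avg t0"
    using assms bound s_pos by (smt (verit))
  then show ?thesis
  proof cases
    case 1
    then show ?thesis by (rule state_tendsto_weighted_avg_if_above_lower[OF bound])
  next
    case 2
    then have "((\<lambda>t. - x t i) \<longlongrightarrow> - weighted_avg t0) at_top"
      using saturated_network.state_tendsto_weighted_avg_if_above_lower[OF negated] bound
      by (simp add: sum_negf)
    from tendsto_minus[OF this] show ?thesis by simp
  qed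
qed

end

theorem theorem5:
  fixes \<alpha> :: "'n::finite \<Rightarrow> 'n \<Rightarrow> real"
    and s :: "'n \<Rightarrow> real"
    and p :: "'n \<Rightarrow> real"
    and x :: "real \<Rightarrow> 'n \<Rightarrow> real"
    and t0 :: real
  assumes nonneg: "\<forall>i j. \<alpha> i j \<ge> 0"
    and sc: "strongly_connected \<alpha>"
    and s_pos: "\<forall>i. s i > 0"
    and p_left: "\<forall>j. (\<Sum>i\<in>UNIV. p i * laplacian \<alpha> i j) = 0"
    and p_norm: "(\<Sum>i\<in>UNIV. p i) = 1"
    and ode: "\<forall>t\<ge>t0. \<forall>i. ((\<lambda>\<tau>. x \<tau> i) has_real_derivative
                 (\<Sum>j\<in>UNIV. \<alpha> i j * (sat (s j) (x t j) - sat (s i) (x t i)))) (at t within {t0..})"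
    and not_eq: "\<exists>i j. x t0 i \<noteq> x t0 j"
  shows "consensus x \<longleftrightarrow> \<bar>\<Sum>i\<in>UNIV. p i * x t0 i\<bar> \<le> Min (range s)"
proof -
  interpret saturated_network \<alpha> s p x t0
    using nonneg sc s_pos p_left p_norm ode by unfold_locales
  show ?thesis
  proof
    assume "consensus x"
    then obtain C where lim: "\<forall>i. ((\<lambda>t. x t i) \<longlongrightarrow> C) at_top"
      by (auto simp: consensus_def)
    from consensus_value_abs_le_Min[OF lim not_eq] show "\<bar>\<Sum>i\<in>UNIV. p i * x t0 i\<bar> \<le> Min (range s)"
      by (simp add: consensus_value_eq_weighted_avg[OF lim, symmetric])
  next
    assume "\<bar>\<Sum>i\<in>UNIV. p i * x t0 i\<bar> \<le> Min (range s)"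
    then show "consensus x"
      unfolding consensus_def using state_tendsto_weighted_avg by blast
  qed
qed

end
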